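(* Let $\mathcal{X}$ be a finite set, $P_X$ a probability distribution on $\mathcal{X}$, $X\sim P_X$, $\rho\ge1$, and for each $n$ let $\mathbf{X}=(X_1,\dots,X_n)$ be i.i.d. with law $P_X$. For a probability distribution $\hat P$ on $\mathcal{X}^n$, let $\hat{\mathbf{X}}_1,\hat{\mathbf{X}}_2,\dots$ be i.i.d. with law $\hat P$, independent of $\mathbf{X}$, let $G(\mathbf{X},\hat{\mathbf{X}}_1^\infty)=\inf\{k\ge1:\hat{\mathbf{X}}_k=\mathbf{X}\}$, $V_\rho(\mathbf{X},\hat{\mathbf{X}}_1^\infty)=\binom{G(\mathbf{X},\hat{\mathbf{X}}_1^\infty)+\rho-1}{\rho}$, and $\mathbb{E}\{V^*_\rho(\mathbf{X},\hat{\mathbf{X}}_1^\infty)\}=\inf_{\hat P}\mathbb{E}\{V_\rho(\mathbf{X},\hat{\mathbf{X}}_1^\infty)\}$ over all probability distributions $\hat P$ on $\mathcal{X}^n$. Then $$\lim_{n\to\infty}\frac1n\log\mathbb{E}\{V^*_\rho(\mathbf{X},\hat{\mathbf{X}}_1^\infty)\}=\rho\, H_{\frac{1}{1+\rho}}(X).$$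
   Context: $\binom{x}{y}=\frac{\Gamma(x+1)}{\Gamma(y+1)\Gamma(x-y+1)}$. Logarithms are natural. For $\alpha>0,\alpha\ne1$, $H_\alpha(X)=\frac{1}{1-\alpha}\log\sum_{x\in\mathcal{X}}P_X(x)^\alpha$. *)

theory Defs
  imports "HOL-Analysis.Analysis" "HOL-Probability.Probability"
begin

definition gbinom :: "real \<Rightarrow> real \<Rightarrow> real" where
  "gbinom x y = Gamma (x + 1) / (Gamma (y + 1) * Gamma (x - y + 1))"

text \<open>Guesswork G(x, xhat_1^infty) = inf {k >= 1. xhat_k = x} (1-based index),
  equal to infinity if x is never guessed. The stream is 0-indexed, so xhat_k = w !! (k-1).\<close>
definition guess_count :: "'b \<Rightarrow> 'b stream \<Rightarrow> enat" where
  "guess_count x w = (if \<exists>k. w !! k = x then enat (Suc (LEAST k. w !! k = x)) else \<infinity>)"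

definition V_rho :: "real \<Rightarrow> 'b \<Rightarrow> 'b stream \<Rightarrow> ennreal" where
  "V_rho \<rho> x w = (case guess_count x w of
       enat g \<Rightarrow> ennreal (gbinom (real g + \<rho> - 1) \<rho>)
     | \<infinity> \<Rightarrow> \<infinity>)"

definition expected_V :: "real \<Rightarrow> 'a pmf \<Rightarrow> nat \<Rightarrow> 'a list pmf \<Rightarrow> ennreal" where
  "expected_V \<rho> P n Phat =
     (\<integral>\<^sup>+ z. V_rho \<rho> (fst z) (snd z)
        \<partial>(measure_pmf (replicate_pmf n P) \<Otimes>\<^sub>M stream_space (measure_pmf Phat)))"

definition opt_expected_V :: "real \<Rightarrow> 'a pmf \<Rightarrow> nat \<Rightarrow> ennreal" where
  "opt_expected_V \<rho> P n =
     (INF Phat \<in> {Q :: 'a list pmf. set_pmf Q \<subseteq> {xs. length xs = n}}. expected_V \<rho> P n Phat)"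

definition renyi_entropy :: "real \<Rightarrow> 'a::finite pmf \<Rightarrow> real" where
  "renyi_entropy \<alpha> P = 1 / (1 - \<alpha>) * ln (\<Sum>x\<in>UNIV. pmf P x powr \<alpha>)"

end

theory Submission
  imports Defs
begin

text \<open>
  If the guesses are drawn independently from Q, the guesswork of a fixed x is geometric with
  success probability Q(x), and the negative binomial series
  sum_k binom(k + rho, rho) (1 - p)^k p = p^(-rho) gives E V_rho = sum_x P(x) Q(x)^(-rho).
  By the tangent-line inequality for the convex map q -> q^(-rho) this is at least
  (sum_x P(x)^(1/(1+rho)))^(1+rho), with equality when Q is proportional to P^(1/(1+rho)).
  For the memoryless source P^n the sum factorizes into the n-th power of the single-letter sum,
  so (1/n) log E V*_rho equals (1 + rho) log sum_x P(x)^(1/(1+rho)) = rho H_(1/(1+rho))(X)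
  already for every n >= 1.
\<close>

section \<open>Waiting for the first correct guess\<close>

(* Streams are 0-indexed: w \<in> first_hit k x means that the guesswork of x is k + 1. *)
definition first_hit :: "nat \<Rightarrow> 'b \<Rightarrow> 'b stream set" where
  "first_hit k x = {w. (\<forall>i<k. w !! i \<noteq> x) \<and> w !! k = x}"

definition never_hit :: "'b \<Rightarrow> 'b stream set" where
  "never_hit x = {w. \<forall>k. w !! k \<noteq> x}"

lemma sets_first_hit: "first_hit k x \<in> sets (stream_space (measure_pmf Q))"
proof -
  have "Measurable.pred (stream_space (measure_pmf Q)) (\<lambda>w. (\<forall>i<k. w !! i \<noteq> x) \<and> w !! k = x)"
    by measurable
  then show ?thesis
    by (simp add: first_hit_def pred_def space_stream_space)
qed

lemma sets_never_hit: "never_hit x \<in> sets (stream_space (measure_pmf Q))"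
proof -
  have "Measurable.pred (stream_space (measure_pmf Q)) (\<lambda>w. \<forall>k. w !! k \<noteq> x)"
    by measurable
  then show ?thesis
    by (simp add: never_hit_def pred_def space_stream_space)
qed

lemma first_hit_iff_Least:
  "w \<in> first_hit k x \<longleftrightarrow> (\<exists>j. w !! j = x) \<and> k = (LEAST j. w !! j = x)"
proof
  assume "w \<in> first_hit k x"
  then have "(LEAST j. w !! j = x) = k"
    unfolding first_hit_def by (intro Least_equality) (auto intro: leI)
  with \<open>w \<in> first_hit k x\<close> show "(\<exists>j. w !! j = x) \<and> k = (LEAST j. w !! j = x)"
    by (auto simp: first_hit_def)
next
  assume "(\<exists>j. w !! j = x) \<and> k = (LEAST j. w !! j = x)"
  then show "w \<in> first_hit k x"
    unfolding first_hit_def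
    using LeastI_ex[of "\<lambda>j. w !! j = x"] not_less_Least[of _ "\<lambda>j. w !! j = x"] by blast
qed

lemma disjoint_family_first_hit: "disjoint_family (\<lambda>k. first_hit k x)"
  by (auto simp: disjoint_family_on_def first_hit_iff_Least)

lemma UN_first_hit: "(\<Union>k. first_hit k x) = - never_hit x"
  by (auto simp: first_hit_iff_Least never_hit_def)

lemma first_hit_Suc: "first_hit (Suc k) x = {w. shd w \<noteq> x \<and> stl w \<in> first_hit k x}"
  by (auto simp: first_hit_def less_Suc_eq_0_disj)

lemma emeasure_first_hit:
  "emeasure (stream_space (measure_pmf Q)) (first_hit k x) = ennreal ((1 - pmf Q x) ^ k * pmf Q x)"
proof -
  let ?S = "stream_space (measure_pmf Q)"
  interpret S: prob_space ?S
    by (rule prob_space.prob_space_stream_space[OF prob_space_measure_pmf])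
  have split_head: "emeasure ?S (first_hit k x) =
      (\<integral>\<^sup>+t. emeasure ?S {w. t ## w \<in> first_hit k x} \<partial>measure_pmf Q)" for k
    using prob_space.emeasure_stream_space[OF prob_space_measure_pmf sets_first_hit]
    by (simp add: space_stream_space)
  show ?thesis
  proof (induction k)
    case 0
    have "emeasure ?S {w. t ## w \<in> first_hit 0 x} = indicator {x} t" for t
      using S.emeasure_space_1 by (cases "t = x") (simp_all add: first_hit_def space_stream_space)
    then show ?case
      by (simp add: split_head emeasure_pmf_single)
  next
    case (Suc k)
    have "emeasure ?S {w. t ## w \<in> first_hit (Suc k) x} =
        ennreal ((1 - pmf Q x) ^ k * pmf Q x) * indicator (- {x}) t" for t
      using Suc.IH by (cases "t = x") (simp_all add: first_hit_Suc)
    then have "emeasure ?S (first_hit (Suc k) x) =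
        ennreal ((1 - pmf Q x) ^ k * pmf Q x) * emeasure (measure_pmf Q) (- {x})"
      by (simp add: split_head nn_integral_cmult_indicator)
    also have "emeasure (measure_pmf Q) (- {x}) = ennreal (1 - pmf Q x)"
      using measure_pmf.prob_compl[of "{x}" Q]
      by (simp add: measure_pmf.emeasure_eq_measure measure_pmf_single Compl_eq_Diff_UNIV)
    finally show ?case
      by (simp add: ennreal_mult'[symmetric] pmf_le_1 mult_ac)
  qed
qed

lemma emeasure_never_hit:
  "emeasure (stream_space (measure_pmf Q)) (never_hit x) = (if pmf Q x > 0 then 0 else 1)"
proof -
  let ?S = "stream_space (measure_pmf Q)" and ?p = "pmf Q x"
  interpret S: prob_space ?S
    by (rule prob_space.prob_space_stream_space[OF prob_space_measure_pmf])
  have "emeasure ?S (- never_hit x) = (\<Sum>k. ennreal ((1 - ?p) ^ k * ?p))"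
    unfolding UN_first_hit[symmetric] emeasure_first_hit[symmetric]
    by (rule suminf_emeasure[symmetric]) (auto simp: sets_first_hit disjoint_family_first_hit)
  also have "\<dots> = (if ?p > 0 then 1 else 0)"
  proof (cases "?p > 0")
    case True
    have "(\<lambda>k. (1 - ?p) ^ k * ?p) sums (1 / (1 - (1 - ?p)) * ?p)"
      using True pmf_le_1[of Q x] by (intro sums_mult2 geometric_sums) auto
    then have "(\<lambda>k. (1 - ?p) ^ k * ?p) sums 1"
      using True by simp
    then have "(\<lambda>k. ennreal ((1 - ?p) ^ k * ?p)) sums ennreal 1"
      using pmf_le_1[of Q x] by (subst sums_ennreal) auto
    then show ?thesis
      using True sums_unique by fastforce
  next
    case False
    then have "?p = 0"
      using pmf_nonneg[of Q x] by linarith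
    then show ?thesis
      by simp
  qed
  finally have "emeasure ?S (- never_hit x) = (if ?p > 0 then 1 else 0)" .
  moreover have "- never_hit x \<in> sets ?S"
    using sets.compl_sets[OF sets_never_hit] by (simp add: space_stream_space Compl_eq_Diff_UNIV)
  then have "emeasure ?S (never_hit x) + emeasure ?S (- never_hit x) = 1"
    using S.emeasure_space_1 sets_never_hit[of x Q]
      plus_emeasure[of "never_hit x" ?S "- never_hit x"]
    by (simp add: space_stream_space)
  ultimately show ?thesis
    by (auto split: if_splits)
qed

section \<open>The negative binomial series\<close>

lemma gbinom_add_self_eq_pochhammer:
  assumes "\<rho> > -1"
  shows "gbinom (real k + \<rho>) \<rho> = pochhammer (\<rho> + 1) k / fact k"
proof -
  have "\<rho> + 1 \<notin> \<int>\<^sub>\<le>\<^sub>0"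
    using assms nonpos_Ints_nonpos by fastforce
  then have "pochhammer (\<rho> + 1) k = Gamma (\<rho> + 1 + real k) / Gamma (\<rho> + 1)"
    by (rule pochhammer_Gamma)
  moreover have "fact k = Gamma (1 + real k)"
    by (simp add: Gamma_fact)
  ultimately show ?thesis
    by (simp add: gbinom_def add_ac)
qed

lemma gbinom_add_self_nonneg: "\<rho> > -1 \<Longrightarrow> gbinom (real k + \<rho>) \<rho> \<ge> 0"
  using pochhammer_pos[of "\<rho> + 1" k] by (simp add: gbinom_add_self_eq_pochhammer)

lemma negative_binomial_sums:
  fixes \<rho> p :: real
  assumes "\<rho> > -1" and "0 < p" and "p \<le> 1"
  shows "(\<lambda>k. gbinom (real k + \<rho>) \<rho> * ((1 - p) ^ k * p)) sums (p powr - \<rho>)"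
proof -
  have "(\<lambda>k. (- (\<rho> + 1) gchoose k) * (- (1 - p)) ^ k) sums (1 + - (1 - p)) powr (- (\<rho> + 1))"
    using assms by (intro gen_binomial_real) auto
  then have "(\<lambda>k. (- (\<rho> + 1) gchoose k) * (- (1 - p)) ^ k * p) sums (p powr (- (\<rho> + 1)) * p)"
    by (intro sums_mult2) simp
  moreover have coeff:
    "(- (\<rho> + 1) gchoose k) * (- (1 - p)) ^ k = gbinom (real k + \<rho>) \<rho> * (1 - p) ^ k" for k
  proof -
    have "(- (\<rho> + 1) gchoose k) * (- (1 - p)) ^ k
        = (-1) ^ k * (pochhammer (\<rho> + 1) k / fact k) * ((-1) ^ k * (1 - p) ^ k)"
      by (simp only: gbinomial_pochhammer minus_minus power_minus[of "1 - p"] times_divide_eq_right)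
    also have "\<dots> = ((-1) ^ k * (-1) ^ k) * (pochhammer (\<rho> + 1) k / fact k * (1 - p) ^ k)"
      by (simp only: mult_ac)
    also have "(-1 :: real) ^ k * (-1) ^ k = 1"
      by (simp flip: power_mult_distrib)
    finally show ?thesis
      using assms by (simp add: gbinom_add_self_eq_pochhammer)
  qed
  moreover have "p powr (- (\<rho> + 1)) * p = p powr - \<rho>"
  proof -
    have "p powr (- (\<rho> + 1)) * p = p powr (- (\<rho> + 1)) * p powr 1"
      using assms by simp
    also have "\<dots> = p powr - \<rho>"
      by (simp only: powr_add[symmetric]) simp
    finally show ?thesis .
  qed
  ultimately show ?thesis
    by (simp only: coeff mult.assoc)
qed

section \<open>Expected guesswork for a fixed guessing distribution\<close>

lemma V_rho_eq_suminf_first_hit: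
  "V_rho \<rho> x w =
     (\<Sum>k. ennreal (gbinom (real k + \<rho>) \<rho>) * indicator (first_hit k x) w)
       + \<infinity> * indicator (never_hit x) w"
proof (cases "\<exists>j. w !! j = x")
  case True
  define m where "m = (LEAST j. w !! j = x)"
  have "(\<lambda>k. ennreal (gbinom (real k + \<rho>) \<rho>) * indicator (first_hit k x) w) =
      (\<lambda>k. if k = m then ennreal (gbinom (real m + \<rho>) \<rho>) else 0)"
    by (simp add: fun_eq_iff indicator_def first_hit_iff_Least True flip: m_def)
  then have "(\<Sum>k. ennreal (gbinom (real k + \<rho>) \<rho>) * indicator (first_hit k x) w) =
      ennreal (gbinom (real m + \<rho>) \<rho>)"
    using sums_single[of m "\<lambda>_. ennreal (gbinom (real m + \<rho>) \<rho>)"] sums_unique by fastforce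
  moreover have "guess_count x w = enat (Suc m)"
    using True by (simp add: guess_count_def m_def)
  then have "V_rho \<rho> x w = ennreal (gbinom (real m + \<rho>) \<rho>)"
    by (simp add: V_rho_def)
  moreover have "w \<notin> never_hit x"
    using True by (simp add: never_hit_def)
  ultimately show ?thesis
    by simp
next
  case False
  then show ?thesis
    by (simp add: V_rho_def guess_count_def first_hit_def never_hit_def)
qed

lemma borel_measurable_V_rho:
  "V_rho \<rho> x \<in> borel_measurable (stream_space (measure_pmf Q))"
  unfolding V_rho_eq_suminf_first_hit[abs_def]
  by (intro borel_measurable_add borel_measurable_suminf_order borel_measurable_times_ennreal
      borel_measurable_const borel_measurable_indicator sets_first_hit sets_never_hit)

lemma nn_integral_V_rho:
  assumes "\<rho> > -1"
  shows "(\<integral>\<^sup>+w. V_rho \<rho> x w \<partial>stream_space (measure_pmf Q)) =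
    (if pmf Q x > 0 then ennreal (pmf Q x powr - \<rho>) else \<infinity>)"
proof -
  let ?S = "stream_space (measure_pmf Q)" and ?p = "pmf Q x"
  let ?hits = "\<Sum>k. ennreal (gbinom (real k + \<rho>) \<rho>) * ennreal ((1 - ?p) ^ k * ?p)"
  have "(\<integral>\<^sup>+w. V_rho \<rho> x w \<partial>?S) =
      (\<integral>\<^sup>+w. (\<Sum>k. ennreal (gbinom (real k + \<rho>) \<rho>) * indicator (first_hit k x) w) \<partial>?S)
        + (\<integral>\<^sup>+w. \<infinity> * indicator (never_hit x) w \<partial>?S)"
    unfolding V_rho_eq_suminf_first_hit
    by (intro nn_integral_add borel_measurable_suminf_order borel_measurable_times_ennreal
        borel_measurable_const borel_measurable_indicator sets_first_hit sets_never_hit)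
  also have "(\<integral>\<^sup>+w. (\<Sum>k. ennreal (gbinom (real k + \<rho>) \<rho>) * indicator (first_hit k x) w) \<partial>?S)
      = ?hits"
    by (subst nn_integral_suminf)
      (auto simp: nn_integral_cmult_indicator emeasure_first_hit sets_first_hit
        intro!: borel_measurable_times_ennreal borel_measurable_indicator)
  also have "(\<integral>\<^sup>+w. \<infinity> * indicator (never_hit x) w \<partial>?S) = \<infinity> * emeasure ?S (never_hit x)"
    by (simp add: nn_integral_cmult_indicator sets_never_hit)
  finally have split: "(\<integral>\<^sup>+w. V_rho \<rho> x w \<partial>?S) = ?hits + \<infinity> * emeasure ?S (never_hit x)" .
  show ?thesis
  proof (cases "?p > 0")
    case True
    have "(\<lambda>k. ennreal (gbinom (real k + \<rho>) \<rho> * ((1 - ?p) ^ k * ?p))) sums ennreal (?p powr - \<rho>)"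
      using assms True pmf_le_1[of Q x] gbinom_add_self_nonneg[OF assms]
      by (subst sums_ennreal) (auto intro!: negative_binomial_sums)
    then have "?hits = ennreal (?p powr - \<rho>)"
      using gbinom_add_self_nonneg[OF assms] pmf_le_1[of Q x]
      by (simp add: ennreal_mult'' sums_iff)
    then show ?thesis
      using True by (simp add: split emeasure_never_hit)
  next
    case False
    then show ?thesis
      by (simp add: split emeasure_never_hit)
  qed
qed

definition expected_guesswork :: "real \<Rightarrow> 'b pmf \<Rightarrow> 'b pmf \<Rightarrow> ennreal" where
  "expected_guesswork \<rho> M Q =
     (\<integral>\<^sup>+z. V_rho \<rho> (fst z) (snd z) \<partial>(measure_pmf M \<Otimes>\<^sub>M stream_space (measure_pmf Q)))"

lemma expected_guesswork_eq_sum: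
  fixes M :: "'b::countable pmf"
  assumes "\<rho> > -1" and "finite (set_pmf M)"
  shows "expected_guesswork \<rho> M Q =
    (\<Sum>x\<in>set_pmf M. (if pmf Q x > 0 then ennreal (pmf Q x powr - \<rho>) else \<infinity>) * pmf M x)"
proof -
  let ?S = "stream_space (measure_pmf Q)"
  interpret S: prob_space ?S
    by (rule prob_space.prob_space_stream_space[OF prob_space_measure_pmf])
  have "(\<lambda>z. V_rho \<rho> (fst z) (snd z)) \<in> borel_measurable (count_space UNIV \<Otimes>\<^sub>M ?S)"
    by (rule measurable_pair_measure_countable1) (simp_all add: borel_measurable_V_rho)
  then have meas: "(\<lambda>z. V_rho \<rho> (fst z) (snd z)) \<in> borel_measurable (measure_pmf M \<Otimes>\<^sub>M ?S)"
    by (simp add: measurable_cong_sets[OF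
          sets_pair_measure_cong[OF sets_measure_pmf_count_space refl] refl])
  have "expected_guesswork \<rho> M Q = (\<integral>\<^sup>+x. \<integral>\<^sup>+w. V_rho \<rho> x w \<partial>?S \<partial>measure_pmf M)"
    unfolding expected_guesswork_def by (rule S.nn_integral_fst[OF meas, simplified, symmetric])
  also have "\<dots> = (\<integral>\<^sup>+x. (if pmf Q x > 0 then ennreal (pmf Q x powr - \<rho>) else \<infinity>) \<partial>measure_pmf M)"
    using assms(1) by (simp add: nn_integral_V_rho)
  also have "\<dots> = (\<Sum>x\<in>set_pmf M. (if pmf Q x > 0 then ennreal (pmf Q x powr - \<rho>) else \<infinity>) * pmf M x)"
    using assms(2) by (rule nn_integral_measure_pmf_finite) simp
  finally show ?thesis .
qed

section \<open>The optimal guessing distribution\<close>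

lemma powr_neg_ge_tangent:
  fixes t \<rho> :: real
  assumes "t > 0" and "\<rho> \<ge> 0"
  shows "1 - \<rho> * (t - 1) \<le> t powr - \<rho>"
proof -
  have "\<rho> * ln t \<le> \<rho> * (t - 1)"
    using assms ln_le_minus_one[of t] by (intro mult_left_mono) auto
  moreover have "1 + - \<rho> * ln t \<le> exp (- \<rho> * ln t)"
    by (rule exp_ge_add_one_self)
  ultimately show ?thesis
    using assms by (simp add: powr_def)
qed

(* The left-hand side is the tangent line of the convex function q \<mapsto> m * q powr - \<rho>
   at its point of contact q = m powr (1 / (1 + \<rho>)) / Z. *)
lemma mult_powr_neg_ge_tangent:
  fixes m q Z \<rho> :: real
  assumes "m > 0" and "q > 0" and "Z > 0" and "\<rho> \<ge> 0"
  shows "Z powr \<rho> * ((1 + \<rho>) * m powr (1 / (1 + \<rho>)) - \<rho> * Z * q) \<le> m * q powr - \<rho>"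
proof -
  define u where "u = m powr (1 / (1 + \<rho>))"
  define t where "t = q * Z / u"
  have "u > 0" "t > 0"
    using assms by (simp_all add: u_def t_def)
  have "Z powr \<rho> * ((1 + \<rho>) * u - \<rho> * Z * q) = u * Z powr \<rho> * (1 - \<rho> * (t - 1))"
    using \<open>u > 0\<close> by (simp add: t_def field_simps)
  also have "\<dots> \<le> u * Z powr \<rho> * t powr - \<rho>"
    using powr_neg_ge_tangent[OF \<open>t > 0\<close> \<open>\<rho> \<ge> 0\<close>] \<open>u > 0\<close> by (intro mult_left_mono) auto
  also have "t powr - \<rho> = q powr - \<rho> * Z powr - \<rho> * u powr \<rho>"
    using assms \<open>u > 0\<close>
    by (simp add: t_def powr_divide powr_mult powr_minus divide_inverse inverse_powr)
  also have "u * Z powr \<rho> * (q powr - \<rho> * Z powr - \<rho> * u powr \<rho>)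
      = (u powr 1 * u powr \<rho>) * q powr - \<rho> * (Z powr \<rho> * Z powr - \<rho>)"
    using \<open>u > 0\<close> by (simp add: mult_ac)
  also have "u powr 1 * u powr \<rho> = m"
  proof -
    have "1 / (1 + \<rho>) + \<rho> / (1 + \<rho>) = 1"
      using \<open>\<rho> \<ge> 0\<close> by (simp add: add_divide_distrib[symmetric])
    then show ?thesis
      using \<open>m > 0\<close> by (simp add: u_def powr_powr flip: powr_add)
  qed
  also have "Z powr \<rho> * Z powr - \<rho> = 1"
    using \<open>Z > 0\<close> by (simp add: powr_minus)
  finally show ?thesis
    by (simp add: u_def)
qed

lemma sum_mult_powr_neg_ge:
  fixes m q :: "'b \<Rightarrow> real"
  assumes "finite F" and "F \<noteq> {}" and m_pos: "\<And>x. x \<in> F \<Longrightarrow> m x > 0"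
    and q_pos: "\<And>x. x \<in> F \<Longrightarrow> q x > 0" and "sum q F \<le> 1" and "\<rho> \<ge> 0"
  shows "(\<Sum>x\<in>F. m x powr (1 / (1 + \<rho>))) powr (1 + \<rho>) \<le> (\<Sum>x\<in>F. m x * q x powr - \<rho>)"
proof -
  define Z where "Z = (\<Sum>x\<in>F. m x powr (1 / (1 + \<rho>)))"
  have "Z > 0"
    unfolding Z_def using m_pos by (intro sum_pos[OF assms(1,2)]) fastforce
  have "Z powr (1 + \<rho>) = Z powr \<rho> * ((1 + \<rho>) * Z - \<rho> * Z * 1)"
    using \<open>Z > 0\<close> by (simp add: powr_add algebra_simps)
  also have "\<dots> \<le> Z powr \<rho> * ((1 + \<rho>) * Z - \<rho> * Z * sum q F)"
    using mult_left_mono[OF \<open>sum q F \<le> 1\<close>, of "\<rho> * Z"] \<open>\<rho> \<ge> 0\<close> \<open>Z > 0\<close>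
    by (intro mult_left_mono) auto
  also have "(1 + \<rho>) * Z - \<rho> * Z * sum q F = (\<Sum>x\<in>F. (1 + \<rho>) * m x powr (1 / (1 + \<rho>)) - \<rho> * Z * q x)"
    by (simp add: Z_def sum_subtractf sum_distrib_left[symmetric])
  also have "Z powr \<rho> * \<dots> = (\<Sum>x\<in>F. Z powr \<rho> * ((1 + \<rho>) * m x powr (1 / (1 + \<rho>)) - \<rho> * Z * q x))"
    by (rule sum_distrib_left)
  also have "\<dots> \<le> (\<Sum>x\<in>F. m x * q x powr - \<rho>)"
    using m_pos q_pos \<open>Z > 0\<close> \<open>\<rho> \<ge> 0\<close> by (intro sum_mono mult_powr_neg_ge_tangent) auto
  finally show ?thesis
    unfolding Z_def .
qed

lemma sum_set_pmf_powr_pos: "finite (set_pmf M) \<Longrightarrow> (\<Sum>x\<in>set_pmf M. pmf M x powr \<alpha>) > 0"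
  using set_pmf_not_empty[of M] by (intro sum_pos) (auto simp: set_pmf_iff)

definition tilted_pmf :: "real \<Rightarrow> 'b pmf \<Rightarrow> 'b pmf" where
  "tilted_pmf \<alpha> M = embed_pmf (\<lambda>x. pmf M x powr \<alpha> / (\<Sum>y\<in>set_pmf M. pmf M y powr \<alpha>))"

lemma
  assumes "finite (set_pmf M)"
  shows pmf_tilted_pmf: "pmf (tilted_pmf \<alpha> M) x = pmf M x powr \<alpha> / (\<Sum>y\<in>set_pmf M. pmf M y powr \<alpha>)"
    and set_pmf_tilted_pmf: "set_pmf (tilted_pmf \<alpha> M) = set_pmf M"
proof -
  let ?Z = "\<Sum>y\<in>set_pmf M. pmf M y powr \<alpha>"
  have "?Z > 0"
    using assms by (rule sum_set_pmf_powr_pos)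
  have "(\<integral>\<^sup>+x. ennreal (pmf M x powr \<alpha> / ?Z) \<partial>count_space UNIV) =
      (\<Sum>x\<in>set_pmf M. ennreal (pmf M x powr \<alpha> / ?Z))"
    using assms by (intro nn_integral_count_space') (auto simp: set_pmf_iff)
  also have "\<dots> = ennreal (\<Sum>x\<in>set_pmf M. pmf M x powr \<alpha> / ?Z)"
    by (rule sum_ennreal) (use \<open>?Z > 0\<close> in simp)
  also have "(\<Sum>x\<in>set_pmf M. pmf M x powr \<alpha> / ?Z) = 1"
    using \<open>?Z > 0\<close> by (simp add: sum_divide_distrib[symmetric])
  finally have "(\<integral>\<^sup>+x. ennreal (pmf M x powr \<alpha> / ?Z) \<partial>count_space UNIV) = 1"
    by simp
  then show pmf_eq: "pmf (tilted_pmf \<alpha> M) x = pmf M x powr \<alpha> / ?Z" for x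
    unfolding tilted_pmf_def using \<open>?Z > 0\<close> by (intro pmf_embed_pmf) simp_all
  show "set_pmf (tilted_pmf \<alpha> M) = set_pmf M"
    using \<open>?Z > 0\<close> by (auto simp: set_pmf_iff pmf_eq)
qed

lemma expected_guesswork_ge:
  fixes M :: "'b::countable pmf"
  assumes "\<rho> \<ge> 0" and "finite (set_pmf M)"
  shows "ennreal ((\<Sum>x\<in>set_pmf M. pmf M x powr (1 / (1 + \<rho>))) powr (1 + \<rho>))
    \<le> expected_guesswork \<rho> M Q"
proof (cases "\<forall>x\<in>set_pmf M. pmf Q x > 0")
  case True
  then have "expected_guesswork \<rho> M Q = (\<Sum>x\<in>set_pmf M. ennreal (pmf M x * pmf Q x powr - \<rho>))"
    using assms by (simp add: expected_guesswork_eq_sum ennreal_mult'' mult.commute)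
  also have "\<dots> = ennreal (\<Sum>x\<in>set_pmf M. pmf M x * pmf Q x powr - \<rho>)"
    by (rule sum_ennreal) simp
  finally have eq: "expected_guesswork \<rho> M Q = ennreal (\<Sum>x\<in>set_pmf M. pmf M x * pmf Q x powr - \<rho>)" .
  have "sum (pmf Q) (set_pmf M) \<le> 1"
    using measure_measure_pmf_finite[OF assms(2), of Q] measure_pmf.prob_le_1[of Q "set_pmf M"]
    by simp
  then show ?thesis
    unfolding eq using True assms
    by (intro ennreal_leI sum_mult_powr_neg_ge) (auto simp: set_pmf_not_empty pmf_positive)
next
  case False
  then obtain x where x: "x \<in> set_pmf M" "\<not> pmf Q x > 0"
    by blast
  then have "\<infinity> = (if pmf Q x > 0 then ennreal (pmf Q x powr - \<rho>) else \<infinity>) * pmf M x"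
    using pmf_positive[OF x(1)] by (simp add: ennreal_top_mult)
  also have "\<dots> \<le> expected_guesswork \<rho> M Q"
    using assms x(1) by (simp only: expected_guesswork_eq_sum) (rule member_le_sum, simp_all)
  finally show ?thesis
    by (simp add: top_unique)
qed

lemma tilted_powr_neg_mult:
  fixes m Z \<rho> :: real
  assumes "m > 0" and "Z > 0" and "\<rho> \<ge> 0"
  shows "(m powr (1 / (1 + \<rho>)) / Z) powr - \<rho> * m = Z powr \<rho> * m powr (1 / (1 + \<rho>))"
proof -
  have "- (\<rho> / (1 + \<rho>)) + 1 = 1 / (1 + \<rho>)"
    using \<open>\<rho> \<ge> 0\<close> by (simp add: field_simps)
  then have "m / m powr (\<rho> / (1 + \<rho>)) = m powr (1 / (1 + \<rho>))"
    using powr_add[of m "- (\<rho> / (1 + \<rho>))" 1] \<open>m > 0\<close> by (simp add: powr_minus_divide)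
  moreover have "(m powr (1 / (1 + \<rho>)) / Z) powr - \<rho> = Z powr \<rho> / m powr (\<rho> / (1 + \<rho>))"
    using \<open>m > 0\<close> \<open>Z > 0\<close> by (simp add: powr_minus_divide powr_divide powr_powr)
  ultimately show ?thesis
    by (metis times_divide_eq_left times_divide_eq_right)
qed

lemma expected_guesswork_tilted_pmf:
  fixes M :: "'b::countable pmf"
  assumes "\<rho> \<ge> 0" and "finite (set_pmf M)"
  shows "expected_guesswork \<rho> M (tilted_pmf (1 / (1 + \<rho>)) M) =
    ennreal ((\<Sum>x\<in>set_pmf M. pmf M x powr (1 / (1 + \<rho>))) powr (1 + \<rho>))"
proof -
  define Z where "Z = (\<Sum>x\<in>set_pmf M. pmf M x powr (1 / (1 + \<rho>)))"
  let ?Q = "tilted_pmf (1 / (1 + \<rho>)) M"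
  have "Z > 0"
    unfolding Z_def using assms(2) by (rule sum_set_pmf_powr_pos)
  have "expected_guesswork \<rho> M ?Q =
      (\<Sum>x\<in>set_pmf M. (if pmf ?Q x > 0 then ennreal (pmf ?Q x powr - \<rho>) else \<infinity>) * pmf M x)"
    using assms by (simp add: expected_guesswork_eq_sum)
  also have "\<dots> = (\<Sum>x\<in>set_pmf M. ennreal (Z powr \<rho> * pmf M x powr (1 / (1 + \<rho>))))"
  proof (rule sum.cong[OF refl])
    fix x
    assume "x \<in> set_pmf M"
    then have "pmf M x > 0"
      by (simp add: pmf_positive)
    moreover have "pmf ?Q x = pmf M x powr (1 / (1 + \<rho>)) / Z"
      using assms(2) by (simp add: pmf_tilted_pmf Z_def)
    ultimately show "(if pmf ?Q x > 0 then ennreal (pmf ?Q x powr - \<rho>) else \<infinity>) * pmf M x =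
        ennreal (Z powr \<rho> * pmf M x powr (1 / (1 + \<rho>)))"
      using \<open>Z > 0\<close> assms(1) by (simp add: tilted_powr_neg_mult ennreal_mult''[symmetric])
  qed
  also have "\<dots> = ennreal (Z powr \<rho> * Z)"
    by (simp add: Z_def sum_ennreal sum_distrib_left)
  also have "Z powr \<rho> * Z = Z powr (1 + \<rho>)"
    using \<open>Z > 0\<close> by (simp add: powr_add)
  finally show ?thesis
    unfolding Z_def .
qed

lemma INF_expected_guesswork:
  fixes M :: "'b::countable pmf"
  assumes "\<rho> \<ge> 0" and "finite (set_pmf M)" and "set_pmf M \<subseteq> A"
  shows "(INF Q \<in> {Q. set_pmf Q \<subseteq> A}. expected_guesswork \<rho> M Q) =
    ennreal ((\<Sum>x\<in>set_pmf M. pmf M x powr (1 / (1 + \<rho>))) powr (1 + \<rho>))"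
proof (rule antisym)
  show "(INF Q \<in> {Q. set_pmf Q \<subseteq> A}. expected_guesswork \<rho> M Q) \<le>
      ennreal ((\<Sum>x\<in>set_pmf M. pmf M x powr (1 / (1 + \<rho>))) powr (1 + \<rho>))"
    using assms by (intro INF_lower2[of "tilted_pmf (1 / (1 + \<rho>)) M"])
      (simp_all add: set_pmf_tilted_pmf expected_guesswork_tilted_pmf)
qed (use assms in \<open>auto intro!: INF_greatest expected_guesswork_ge\<close>)

section \<open>Memoryless sources\<close>

lemma pmf_replicate_pmf:
  "pmf (replicate_pmf n P) xs = (if length xs = n then prod_list (map (pmf P) xs) else 0)"
proof (induction n arbitrary: xs)
  case 0
  then show ?case
    by (simp add: pmf_return indicator_def)
next
  case (Suc n)
  have replicate_Suc:
    "replicate_pmf (Suc n) P = map_pmf (\<lambda>(x, xs). x # xs) (pair_pmf P (replicate_pmf n P))"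
    by (simp add: pair_pmf_def map_pmf_def bind_assoc_pmf bind_return_pmf)
  show ?case
  proof (cases xs)
    case Nil
    have "[] \<notin> set_pmf (replicate_pmf (Suc n) P)"
      by (simp add: set_replicate_pmf del: replicate_pmf.simps)
    then show ?thesis
      using Nil by (simp add: set_pmf_iff del: replicate_pmf.simps)
  next
    case (Cons y ys)
    have "pmf (replicate_pmf (Suc n) P) (y # ys) = pmf P y * pmf (replicate_pmf n P) ys"
      using pmf_map_inj'[of "\<lambda>(x, xs). x # xs" "pair_pmf P (replicate_pmf n P)" "(y, ys)"]
      by (simp add: replicate_Suc inj_def pmf_pair del: replicate_pmf.simps)
    then show ?thesis
      using Cons Suc.IH by simp
  qed
qed

lemma sum_lists_length_prod_list:
  fixes g :: "'a::finite \<Rightarrow> 'b::comm_semiring_1"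
  shows "(\<Sum>xs\<in>{xs. length xs = n}. prod_list (map g xs)) = (\<Sum>x\<in>UNIV. g x) ^ n"
proof (induction n)
  case 0
  have "{xs :: 'a list. length xs = 0} = {[]}"
    by auto
  then show ?case
    by simp
next
  case (Suc n)
  have image:
    "{xs :: 'a list. length xs = Suc n} = (\<lambda>(x, ys). x # ys) ` (UNIV \<times> {ys. length ys = n})"
    by (auto simp: length_Suc_conv)
  have inj: "inj_on (\<lambda>(x, ys). x # ys) (UNIV \<times> {ys :: 'a list. length ys = n})"
    by (auto simp: inj_on_def)
  have "(\<Sum>xs\<in>{xs. length xs = Suc n}. prod_list (map g xs)) =
      (\<Sum>(x, ys)\<in>UNIV \<times> {ys. length ys = n}. g x * prod_list (map g ys))"
    unfolding image sum.reindex[OF inj] by (simp add: case_prod_unfold)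
  also have "\<dots> = (\<Sum>x\<in>UNIV. \<Sum>ys\<in>{ys. length ys = n}. g x * prod_list (map g ys))"
    by (rule sum.cartesian_product[symmetric])
  also have "\<dots> = (\<Sum>x\<in>UNIV. g x) ^ Suc n"
    by (simp add: Suc.IH sum_distrib_left[symmetric] sum_distrib_right[symmetric])
  finally show ?case .
qed

lemma prod_list_powr:
  fixes xs :: "real list"
  assumes "\<And>x. x \<in> set xs \<Longrightarrow> x \<ge> 0"
  shows "prod_list xs powr a = prod_list (map (\<lambda>x. x powr a) xs)"
  using assms by (induction xs) (simp_all add: powr_mult prod_list_nonneg)

lemma sum_pmf_replicate_pmf_powr:
  fixes P :: "'a::finite pmf"
  shows "(\<Sum>xs\<in>set_pmf (replicate_pmf n P). pmf (replicate_pmf n P) xs powr a) =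
    (\<Sum>x\<in>UNIV. pmf P x powr a) ^ n"
proof -
  have "(\<Sum>xs\<in>set_pmf (replicate_pmf n P). pmf (replicate_pmf n P) xs powr a) =
      (\<Sum>xs\<in>{xs. length xs = n}. pmf (replicate_pmf n P) xs powr a)"
  proof (rule sum.mono_neutral_left[OF finite_list_length])
    show "set_pmf (replicate_pmf n P) \<subseteq> {xs. length xs = n}"
      by (auto simp: set_replicate_pmf)
  qed (simp add: set_pmf_iff)
  also have "\<dots> = (\<Sum>xs\<in>{xs. length xs = n}. prod_list (map (\<lambda>x. pmf P x powr a) xs))"
  proof (rule sum.cong[OF refl])
    fix xs :: "'a list"
    assume "xs \<in> {xs. length xs = n}"
    moreover have
      "prod_list (map (pmf P) xs) powr a = prod_list (map (\<lambda>x. x powr a) (map (pmf P) xs))"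
      by (rule prod_list_powr) auto
    ultimately show "pmf (replicate_pmf n P) xs powr a = prod_list (map (\<lambda>x. pmf P x powr a) xs)"
      by (simp add: pmf_replicate_pmf o_def)
  qed
  also have "\<dots> = (\<Sum>x\<in>UNIV. pmf P x powr a) ^ n"
    by (rule sum_lists_length_prod_list)
  finally show ?thesis .
qed

lemma opt_expected_V_eq:
  fixes P :: "'a::finite pmf"
  assumes "\<rho> \<ge> 0"
  shows "opt_expected_V \<rho> P n = ennreal (((\<Sum>x\<in>UNIV. pmf P x powr (1 / (1 + \<rho>))) ^ n) powr (1 + \<rho>))"
proof -
  have support: "set_pmf (replicate_pmf n P) \<subseteq> {xs. length xs = n}"
    by (auto simp: set_replicate_pmf)
  then have "finite (set_pmf (replicate_pmf n P))"
    by (rule finite_subset) (rule finite_list_length)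
  with assms support show ?thesis
    by (simp add: opt_expected_V_def expected_V_def expected_guesswork_def[symmetric]
        INF_expected_guesswork sum_pmf_replicate_pmf_powr)
qed

theorem corollary1:
  fixes P :: "'a::finite pmf" and \<rho> :: real
  assumes "\<rho> \<ge> 1"
  shows "(\<lambda>n. ln (enn2real (opt_expected_V \<rho> P n)) / real n)
           \<longlonglongrightarrow> \<rho> * renyi_entropy (1 / (1 + \<rho>)) P"
proof -
  define S where "S = (\<Sum>x\<in>UNIV. pmf P x powr (1 / (1 + \<rho>)))"
  obtain y where "y \<in> set_pmf P"
    using set_pmf_not_empty[of P] by blast
  then have "S > 0"
    unfolding S_def by (intro sum_pos2[of _ y]) (auto simp: set_pmf_iff)
  have "ln (enn2real (opt_expected_V \<rho> P n)) / real n = (1 + \<rho>) * ln S" if "n \<ge> 1" for n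
    using that assms \<open>S > 0\<close>
    by (simp add: opt_expected_V_eq flip: S_def) (simp add: ln_powr ln_realpow)
  then have "(\<lambda>n. ln (enn2real (opt_expected_V \<rho> P n)) / real n) \<longlonglongrightarrow> (1 + \<rho>) * ln S"
    by (intro tendsto_eventually) (auto simp: eventually_sequentially)
  moreover have "\<rho> * renyi_entropy (1 / (1 + \<rho>)) P = (1 + \<rho>) * ln S"
    using assms by (simp add: renyi_entropy_def S_def field_simps)
  ultimately show ?thesis
    by simp
qed

end
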